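(* Let $X$, $Y$ be disjoint countable sets of cardinality at least two, and let $M\le\mathrm{Sym}(X)$ and $N\le\mathrm{Sym}(Y)$ be nontrivial closed permutation groups. Then either $|M\boxtimes N|\le\aleph_0$ or $|M\boxtimes N| = 2^{\aleph_0}$, with the former holding if and only if $M$ and $N$ are semi-regular.
   Context: Closed means closed in the permutation topology (pointwise convergence) of $\mathrm{Sym}(X)$, resp. $\mathrm{Sym}(Y)$. A permutation group is semi-regular if all point stabilisers are trivial. Let $T$ be the $(|X|,|Y|)$-biregular tree with natural bipartition $VT=V_X\sqcup V_Y$ (vertices in $V_X$ have valency $|X|$, in $V_Y$ valency $|Y|$). $A(v)$, $\overline{A}(v)$ are the sets of arcs with origin, resp. terminus, $v$. A legal colouring is a map $c:AT\to X\cup Y$ restricting to a bijection $A(v)\to X$ for $v\in V_X$, to a bijection $A(v)\to Y$ for $v\in V_Y$, and constant on each $\overline{A}(v)$. $U_c(M,N)$ is the group of $g\in\mathrm{Aut}(T)$ with $gV_X=V_X$ and $c|_{A(gv)}\circ g|_{A(v)}\circ(c|_{A(v)})^{-1}$ in $M$ for $v\in V_X$ and in $N$ for $v\in V_Y$. The box product $M\boxtimes N\le\mathrm{Sym}(V_Y)$ is the group induced on $V_Y$ by $U_c(M,N)$. *)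

theory Defs
  imports "HOL-Combinatorics.Permutations" "HOL-Library.Equipollence" "HOL-Library.Countable_Set"
begin

text \<open>Elements of Sym(X) are represented as permutations of the ambient type fixing
  everything outside X (i.e. f permutes X).\<close>

definition perm_group :: "('a \<Rightarrow> 'a) set \<Rightarrow> 'a set \<Rightarrow> bool" where
  "perm_group M X \<longleftrightarrow> M \<subseteq> {f. f permutes X} \<and> id \<in> M \<and>
     (\<forall>f\<in>M. \<forall>g\<in>M. f \<circ> g \<in> M) \<and> (\<forall>f\<in>M. inv f \<in> M)"

text \<open>Closed in the permutation topology (pointwise convergence) of Sym(X).\<close>
definition closed_perm_group :: "('a \<Rightarrow> 'a) set \<Rightarrow> 'a set \<Rightarrow> bool" where
  "closed_perm_group M X \<longleftrightarrow> perm_group M X \<and>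
     (\<forall>g. g permutes X \<longrightarrow>
        (\<forall>F. finite F \<and> F \<subseteq> X \<longrightarrow> (\<exists>m\<in>M. \<forall>x\<in>F. m x = g x)) \<longrightarrow> g \<in> M)"

definition nontrivial_group :: "('a \<Rightarrow> 'a) set \<Rightarrow> bool" where
  "nontrivial_group M \<longleftrightarrow> M \<noteq> {id}"

definition semi_regular :: "('a \<Rightarrow> 'a) set \<Rightarrow> 'a set \<Rightarrow> bool" where
  "semi_regular M X \<longleftrightarrow> (\<forall>m\<in>M. \<forall>x\<in>X. m x = x \<longrightarrow> m = id)"

definition graph :: "'v set \<Rightarrow> ('v \<Rightarrow> 'v \<Rightarrow> bool) \<Rightarrow> bool" where
  "graph V adj \<longleftrightarrow> (\<forall>u w. adj u w \<longrightarrow> u \<in> V \<and> w \<in> V \<and> adj w u \<and> u \<noteq> w)"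

definition reduced_path :: "('v \<Rightarrow> 'v \<Rightarrow> bool) \<Rightarrow> 'v list \<Rightarrow> 'v \<Rightarrow> 'v \<Rightarrow> bool" where
  "reduced_path adj p u w \<longleftrightarrow> p \<noteq> [] \<and> hd p = u \<and> last p = w \<and>
     (\<forall>i. Suc i < length p \<longrightarrow> adj (p ! i) (p ! Suc i)) \<and>
     (\<forall>i. Suc (Suc i) < length p \<longrightarrow> p ! i \<noteq> p ! Suc (Suc i))"

definition tree :: "'v set \<Rightarrow> ('v \<Rightarrow> 'v \<Rightarrow> bool) \<Rightarrow> bool" where
  "tree V adj \<longleftrightarrow> V \<noteq> {} \<and> graph V adj \<and> (\<forall>u\<in>V. \<forall>w\<in>V. \<exists>!p. reduced_path adj p u w)"

definition arcs :: "('v \<Rightarrow> 'v \<Rightarrow> bool) \<Rightarrow> ('v \<times> 'v) set" where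
  "arcs adj = {(u, w). adj u w}"

definition out_arcs :: "('v \<Rightarrow> 'v \<Rightarrow> bool) \<Rightarrow> 'v \<Rightarrow> ('v \<times> 'v) set" where
  "out_arcs adj v = {(v, w) | w. adj v w}"

definition in_arcs :: "('v \<Rightarrow> 'v \<Rightarrow> bool) \<Rightarrow> 'v \<Rightarrow> ('v \<times> 'v) set" where
  "in_arcs adj v = {(w, v) | w. adj w v}"

text \<open>(V, adj) is a tree with bipartition V = VX \<union> VY such that the colouring c is legal;
  the bijections A(v) \<rightarrow> X (v \<in> VX), A(v) \<rightarrow> Y (v \<in> VY) force valencies |X| resp. |Y|,
  so the tree is the (|X|,|Y|)-biregular tree with its natural bipartition.\<close>
definition legal_coloured_biregular_tree ::
  "'a set \<Rightarrow> 'a set \<Rightarrow> 'v set \<Rightarrow> ('v \<Rightarrow> 'v \<Rightarrow> bool) \<Rightarrow> 'v set \<Rightarrow> 'v set \<Rightarrow> ('v \<times> 'v \<Rightarrow> 'a) \<Rightarrow> bool"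
  where
  "legal_coloured_biregular_tree X Y V adj VX VY c \<longleftrightarrow>
     tree V adj \<and> V = VX \<union> VY \<and> VX \<inter> VY = {} \<and>
     (\<forall>u w. adj u w \<longrightarrow> (u \<in> VX \<and> w \<in> VY) \<or> (u \<in> VY \<and> w \<in> VX)) \<and>
     (\<forall>v\<in>VX. bij_betw c (out_arcs adj v) X) \<and>
     (\<forall>v\<in>VY. bij_betw c (out_arcs adj v) Y) \<and>
     (\<forall>v\<in>V. \<forall>a\<in>in_arcs adj v. \<forall>b\<in>in_arcs adj v. c a = c b)"

definition tree_aut :: "'v set \<Rightarrow> ('v \<Rightarrow> 'v \<Rightarrow> bool) \<Rightarrow> ('v \<Rightarrow> 'v) \<Rightarrow> bool" where
  "tree_aut V adj g \<longleftrightarrow> g permutes V \<and> (\<forall>u\<in>V. \<forall>w\<in>V. adj u w \<longleftrightarrow> adj (g u) (g w))"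

text \<open>Local action c|A(gv) \<circ> g|A(v) \<circ> (c|A(v))^{-1}, extended by the identity outside
  the colour set c(A(v)).\<close>
definition local_action ::
  "('v \<Rightarrow> 'v \<Rightarrow> bool) \<Rightarrow> ('v \<times> 'v \<Rightarrow> 'a) \<Rightarrow> ('v \<Rightarrow> 'v) \<Rightarrow> 'v \<Rightarrow> 'a \<Rightarrow> 'a" where
  "local_action adj c g v = (\<lambda>x. if x \<in> c ` out_arcs adj v
      then (let e = inv_into (out_arcs adj v) c x in c (g (fst e), g (snd e)))
      else x)"

definition U_c ::
  "'v set \<Rightarrow> ('v \<Rightarrow> 'v \<Rightarrow> bool) \<Rightarrow> 'v set \<Rightarrow> 'v set \<Rightarrow> ('v \<times> 'v \<Rightarrow> 'a)
     \<Rightarrow> ('a \<Rightarrow> 'a) set \<Rightarrow> ('a \<Rightarrow> 'a) set \<Rightarrow> ('v \<Rightarrow> 'v) set" where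
  "U_c V adj VX VY c M N = {g. tree_aut V adj g \<and> g ` VX = VX \<and>
      (\<forall>v\<in>VX. local_action adj c g v \<in> M) \<and> (\<forall>v\<in>VY. local_action adj c g v \<in> N)}"

text \<open>The box product: the group induced on VY by U_c(M,N) (elements represented as
  permutations of VY, identity outside VY).\<close>
definition box_product ::
  "'v set \<Rightarrow> ('v \<Rightarrow> 'v \<Rightarrow> bool) \<Rightarrow> 'v set \<Rightarrow> 'v set \<Rightarrow> ('v \<times> 'v \<Rightarrow> 'a)
     \<Rightarrow> ('a \<Rightarrow> 'a) set \<Rightarrow> ('a \<Rightarrow> 'a) set \<Rightarrow> ('v \<Rightarrow> 'v) set" where
  "box_product V adj VX VY c M N =
     (\<lambda>g. \<lambda>v. if v \<in> VY then g v else v) ` U_c V adj VX VY c M N"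

end

theory Submission
  imports Defs "HOL-Library.Sublist"
begin

text \<open>Fix a root r \<in> VX. Reading off colours along the unique non-backtracking path from r labels
  every vertex by a word over X \<union> Y (its address); in particular the tree is countable.

  If M and N are semi-regular, an element g of U_c(M,N) is determined by g r and its local
  action at r: the local action at a vertex determines the image of each neighbour, and the
  image of the arc back to the previous vertex determines, by semi-regularity, the local action
  at the next vertex. So U_c(M,N) injects into V \<times> M and is countable.

  If some \<sigma> \<in> M fixes x0 but not x1, take a family of words (markers), none a prefix of another,
  ending in letters fixed by \<sigma>. For every set S of markers, applying \<sigma> to all letters of an
  address following a marker in S is an element of U_c(M,N), and different S give different
  elements. This gives 2^\<aleph>0 elements, which is also an upper bound as V is countable. Tree
  automorphisms preserving the bipartition are determined by their action on VY, so the box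
  product has the same cardinality as U_c(M,N). The symmetric case of N is reduced to this one
  by exchanging the roles of X and Y.\<close>


lemma perm_groupD:
  assumes "perm_group K Z"
  shows perm_group_permutes: "f \<in> K \<Longrightarrow> f permutes Z"
    and perm_group_id: "id \<in> K"
    and perm_group_comp: "f \<in> K \<Longrightarrow> g \<in> K \<Longrightarrow> f \<circ> g \<in> K"
    and perm_group_inv: "f \<in> K \<Longrightarrow> inv f \<in> K"
  using assms unfolding perm_group_def by auto

lemma semi_regular_eq_if_agree:
  assumes K: "perm_group K Z" and "semi_regular K Z" and "a \<in> K" "b \<in> K" "z \<in> Z" "a z = b z"
  shows "a = b"
proof -
  have b: "b permutes Z" using perm_group_permutes[OF K \<open>b \<in> K\<close>] .
  have "inv b \<circ> a \<in> K" using K \<open>a \<in> K\<close> \<open>b \<in> K\<close> by (simp add: perm_group_comp perm_group_inv)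
  moreover have "(inv b \<circ> a) z = z" using \<open>a z = b z\<close> permutes_inverses(2)[OF b] by simp
  ultimately have "inv b \<circ> a = id" using assms(2) \<open>z \<in> Z\<close> unfolding semi_regular_def by blast
  then have "b \<circ> (inv b \<circ> a) = b" by simp
  then show ?thesis using permutes_inv_o(1)[OF b] by (simp add: comp_assoc[symmetric])
qed

lemma countable_semi_regular:
  assumes K: "perm_group K Z" and "semi_regular K Z" and "countable Z" and "z \<in> Z"
  shows "countable K"
proof (rule countable_image_inj_on)
  have "(\<lambda>a. a z) ` K \<subseteq> Z"
    using \<open>z \<in> Z\<close> by (auto simp: permutes_in_image dest: perm_group_permutes[OF K])
  then show "countable ((\<lambda>a. a z) ` K)" using \<open>countable Z\<close> by (rule countable_subset)
  show "inj_on (\<lambda>a. a z) K"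
    by (rule inj_onI) (rule semi_regular_eq_if_agree[OF assms(1,2) _ _ \<open>z \<in> Z\<close>])
qed

section \<open>Twisting words beyond a prefix\<close>

definition prefix_antichain :: "'a list set \<Rightarrow> bool" where
  "prefix_antichain T \<longleftrightarrow> (\<forall>t\<in>T. \<forall>t'\<in>T. prefix t t' \<longrightarrow> t = t')"

definition twist :: "'a list set \<Rightarrow> ('a \<Rightarrow> 'a) \<Rightarrow> 'a list \<Rightarrow> 'a list" where
  "twist T \<sigma> s = map (\<lambda>i. if \<exists>t\<in>T. prefix t (take i s) then \<sigma> (s ! i) else s ! i) [0..<length s]"

lemma length_twist [simp]: "length (twist T \<sigma> s) = length s"
  by (simp add: twist_def)

lemma nth_twist:
  "i < length s \<Longrightarrow> twist T \<sigma> s ! i = (if \<exists>t\<in>T. prefix t (take i s) then \<sigma> (s ! i) else s ! i)"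
  by (simp add: twist_def)

lemma twist_snoc [simp]:
  "twist T \<sigma> (s @ [x]) = twist T \<sigma> s @ [if \<exists>t\<in>T. prefix t s then \<sigma> x else x]"
  by (rule nth_equalityI) (auto simp: nth_twist nth_append less_Suc_eq)

lemma twist_id [simp]: "twist T id s = s"
  by (rule nth_equalityI) (auto simp: nth_twist)

lemma twist_no_prefix:
  assumes "\<not> (\<exists>t\<in>T. prefix t s)"
  shows "twist T \<sigma> s = s"
proof -
  have "\<not> (\<exists>t\<in>T. prefix t (take i s))" for i
    using assms prefix_order.trans[OF _ take_is_prefix] by blast
  then show ?thesis by (intro nth_equalityI) (simp_all add: nth_twist)
qed

lemma twist_beyond_prefix:
  assumes T: "prefix_antichain T" and "t \<in> T" "prefix t s"
  shows "twist T \<sigma> s = t @ map \<sigma> (drop (length t) s)"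
proof -
  obtain u where s: "s = t @ u" using \<open>prefix t s\<close> by (auto simp: prefix_def)
  have twisted_iff: "(\<exists>t'\<in>T. prefix t' (take i s)) \<longleftrightarrow> length t \<le> i" for i
  proof
    assume "\<exists>t'\<in>T. prefix t' (take i s)"
    then obtain t' where "t' \<in> T" "prefix t' (take i s)" by blast
    then have "prefix t' s" "length t' \<le> i"
      using prefix_order.trans[OF _ take_is_prefix] prefix_length_le by fastforce+
    then have "t' = t" using T \<open>t \<in> T\<close> \<open>t' \<in> T\<close> prefix_same_cases[OF _ \<open>prefix t s\<close>]
      unfolding prefix_antichain_def by blast
    then show "length t \<le> i" using \<open>length t' \<le> i\<close> by simp
  next
    assume "length t \<le> i"
    then show "\<exists>t'\<in>T. prefix t' (take i s)" using \<open>t \<in> T\<close> s by (auto simp: prefix_def)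
  qed
  show ?thesis
  proof (rule nth_equalityI)
    fix i assume i: "i < length (twist T \<sigma> s)"
    then have "twist T \<sigma> s ! i = (if length t \<le> i then \<sigma> (s ! i) else s ! i)"
      by (simp add: nth_twist twisted_iff)
    then show "twist T \<sigma> s ! i = (t @ map \<sigma> (drop (length t) s)) ! i"
      using i by (simp add: s nth_append)
  qed (simp add: s)
qed

lemma twist_twist:
  assumes "prefix_antichain T"
  shows "twist T \<sigma>' (twist T \<sigma> s) = twist T (\<sigma>' \<circ> \<sigma>) s"
proof (cases "\<exists>t\<in>T. prefix t s")
  case True
  then obtain t where t: "t \<in> T" "prefix t s" by blast
  then show ?thesis
    using twist_beyond_prefix[OF assms t(1)] twist_beyond_prefix[OF assms t]
    by (simp add: prefix_length_le)
next
  case False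
  then show ?thesis by (simp add: twist_no_prefix)
qed

lemma nth_Cons_twist_upto_prefix:
  assumes "prefix_antichain T" "t \<in> T" "prefix t s" "j \<le> length t"
  shows "(k # twist T \<sigma> s) ! j = (k # s) ! j"
proof -
  obtain u where s: "s = t @ u" using assms(3) by (auto simp: prefix_def)
  show ?thesis
    using twist_beyond_prefix[OF assms(1-3)] assms(4) s by (cases j) (auto simp: nth_append)
qed

lemma nth_Cons_twist_beyond_prefix:
  assumes "prefix_antichain T" "t \<in> T" "prefix t s" "j \<le> length s" "length t \<le> Suc j"
    and fixed: "\<forall>x\<in>set (drop (length t - 2) t). \<sigma> x = x" and "2 \<le> length t"
  shows "(k # twist T \<sigma> s) ! j = \<sigma> ((k # s) ! j)"
proof -
  obtain u where s: "s = t @ u" using assms(3) by (auto simp: prefix_def)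
  obtain i where j: "j = Suc i" using assms(5,7) by (cases j) auto
  show ?thesis
  proof (cases "i < length t")
    case True
    then have "t ! i \<in> set (drop (length t - 2) t)"
      using assms(5) j
      by (auto simp: in_set_conv_nth nth_drop intro!: exI[of _ "i - (length t - 2)"])
    then show ?thesis
      using twist_beyond_prefix[OF assms(1-3)] fixed True s j by (simp add: nth_append)
  next
    case False
    then show ?thesis
      using twist_beyond_prefix[OF assms(1-3)] s j assms(4) by (simp add: nth_append)
  qed
qed

lemma nth_Cons_append_length: "(k # xs @ ys) ! length xs = last (k # xs)"
  by (induction xs arbitrary: k) auto

text \<open>k plays the role of the letter preceding s.\<close>
definition nonbacktracking :: "'a \<Rightarrow> 'a list \<Rightarrow> bool" where
  "nonbacktracking k s \<longleftrightarrow> (\<forall>i. Suc i < length s \<longrightarrow> s ! Suc i \<noteq> (k # s) ! i)"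

lemma nonbacktracking_take: "nonbacktracking k s \<Longrightarrow> nonbacktracking k (take n s)"
  unfolding nonbacktracking_def
proof (intro allI impI)
  fix i assume nb: "\<forall>i. Suc i < length s \<longrightarrow> s ! Suc i \<noteq> (k # s) ! i"
    and i: "Suc i < length (take n s)"
  have "(k # take n s) ! i = (k # s) ! i" using i by (cases i) simp_all
  then show "take n s ! Suc i \<noteq> (k # take n s) ! i" using nb i by simp
qed

lemma nonbacktracking_snoc:
  "nonbacktracking k (s @ [x]) \<longleftrightarrow> nonbacktracking k s \<and> (s \<noteq> [] \<longrightarrow> x \<noteq> last (k # butlast s))"
proof -
  have old: "(s @ [x]) ! Suc i = s ! Suc i \<and> ((k # s) @ [x]) ! i = (k # s) ! i"
    if "Suc i < length s" for i
    using that by (simp add: nth_append del: append_Cons)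
  have new: "(s @ [x]) ! Suc i = x \<and> ((k # s) @ [x]) ! i = (k # s) ! i"
    if "Suc i = length s" for i
    using that by (simp add: nth_append del: append_Cons)
  have last: "last (k # butlast s) = (k # s) ! (length s - 1)" if "s \<noteq> []"
    using that by (cases s rule: rev_cases) (auto simp: nth_append last_conv_nth)
  have main: "(\<forall>i. Suc i < length (s @ [x]) \<longrightarrow> (s @ [x]) ! Suc i \<noteq> ((k # s) @ [x]) ! i) \<longleftrightarrow>
      (\<forall>i. Suc i < length s \<longrightarrow> s ! Suc i \<noteq> (k # s) ! i) \<and> (s \<noteq> [] \<longrightarrow> x \<noteq> (k # s) ! (length s - 1))"
    (is "?L \<longleftrightarrow> ?R1 \<and> ?R2")
  proof (intro iffI conjI allI impI)
    fix i assume L: ?L and "Suc i < length s"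
    then have "(s @ [x]) ! Suc i \<noteq> ((k # s) @ [x]) ! i" by (intro L[rule_format]) simp
    then show "s ! Suc i \<noteq> (k # s) ! i" using old[OF \<open>Suc i < length s\<close>] by simp
  next
    assume L: ?L and "s \<noteq> []"
    then have "Suc (length s - 1) = length s" by simp
    moreover have "(s @ [x]) ! Suc (length s - 1) \<noteq> ((k # s) @ [x]) ! (length s - 1)"
      by (rule L[rule_format]) (use \<open>s \<noteq> []\<close> in simp)
    ultimately show "x \<noteq> (k # s) ! (length s - 1)" using new[of "length s - 1"] by simp
  next
    fix i assume R: "?R1 \<and> ?R2" and i: "Suc i < length (s @ [x])"
    show "(s @ [x]) ! Suc i \<noteq> ((k # s) @ [x]) ! i"
    proof (cases "Suc i < length s")
      case True
      then show ?thesis using R old[OF True] by (simp del: append_Cons)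
    next
      case False
      then have "Suc i = length s" using i by simp
      moreover from this have "s \<noteq> []" "i = length s - 1" by auto
      ultimately show ?thesis using R new[of i] by (simp del: append_Cons)
    qed
  qed
  have "(s \<noteq> [] \<longrightarrow> x \<noteq> (k # s) ! (length s - 1)) \<longleftrightarrow> (s \<noteq> [] \<longrightarrow> x \<noteq> last (k # butlast s))"
    using last by auto
  then show ?thesis unfolding nonbacktracking_def append_Cons[symmetric] main by blast
qed

lemma tree_unique_path: "tree V adj \<Longrightarrow> u \<in> V \<Longrightarrow> w \<in> V \<Longrightarrow> \<exists>!p. reduced_path adj p u w"
  by (simp add: tree_def)

lemma tree_adj: "tree V adj \<Longrightarrow> adj u w \<Longrightarrow> u \<in> V \<and> w \<in> V \<and> adj w u"
  by (simp add: tree_def graph_def)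

lemma reduced_path_length_3: "reduced_path adj [u, v, w] u w \<longleftrightarrow> adj u v \<and> adj v w \<and> u \<noteq> w"
  unfolding reduced_path_def by (auto simp: All_less_Suc)

lemma tree_common_neighbour_unique:
  assumes T: "tree V adj" and "adj a w" "adj a w'" "adj b w" "adj b w'" "w \<noteq> w'"
  shows "a = b"
proof -
  have "reduced_path adj [w, a, w'] w w'" "reduced_path adj [w, b, w'] w w'"
    using assms(2-6) tree_adj[OF T] by (simp_all add: reduced_path_length_3)
  moreover have "w \<in> V" "w' \<in> V" using tree_adj[OF T] assms(2,3) by blast+
  ultimately have "[w, a, w'] = [w, b, w']" using tree_unique_path[OF T] by blast
  then show "a = b" by simp
qed

lemma permutations_lepoll_nat_set:
  fixes V :: "'v set"
  assumes "countable V"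
  shows "{f. f permutes V} \<lesssim> (UNIV :: nat set set)"
proof -
  have "countable (V \<times> V)" using assms by simp
  then obtain e :: "'v \<times> 'v \<Rightarrow> nat" where e: "inj_on e (V \<times> V)"
    unfolding countable_def by blast
  define code where "code f = e ` {(v, f v) | v. v \<in> V}" for f :: "'v \<Rightarrow> 'v"
  have "inj_on code {f. f permutes V}"
  proof (rule inj_onI)
    fix f g assume "f \<in> {f. f permutes V}" "g \<in> {f. f permutes V}" and "code f = code g"
    then have f: "f permutes V" and g: "g permutes V" by simp_all
    have "{(v, f v) | v. v \<in> V} \<subseteq> V \<times> V" "{(v, g v) | v. v \<in> V} \<subseteq> V \<times> V"
      by (auto simp: permutes_in_image[OF f] permutes_in_image[OF g])
    then have graphs: "{(v, f v) | v. v \<in> V} = {(v, g v) | v. v \<in> V}"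
      using inj_on_image_eq_iff[OF e] \<open>code f = code g\<close> unfolding code_def by simp
    show "f = g"
    proof
      fix v
      show "f v = g v"
      proof (cases "v \<in> V")
        case True
        then have "(v, f v) \<in> {(v, g v) | v. v \<in> V}" using graphs by auto
        then show ?thesis by auto
      next
        case False
        then show ?thesis using permutes_not_in[OF f] permutes_not_in[OF g] by simp
      qed
    qed
  qed
  then show ?thesis unfolding lepoll_def by blast
qed

lemma uncountable_UNIV_nat_set: "\<not> countable (UNIV :: nat set set)"
proof
  assume "countable (UNIV :: nat set set)"
  then have "Pow (UNIV :: nat set) \<lesssim> (UNIV :: nat set)"
    unfolding countable_def lepoll_def by auto
  then show False using lesspoll_Pow_self[of "UNIV :: nat set"] lepoll_antisym lepoll_Pow_self
    unfolding lesspoll_def by blast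
qed

section \<open>Addresses in a legally coloured tree\<close>

locale coloured_tree =
  fixes X Y :: "'a set" and V VX VY :: "'v set" and adj :: "'v \<Rightarrow> 'v \<Rightarrow> bool"
    and c :: "'v \<times> 'v \<Rightarrow> 'a"
  assumes legal: "legal_coloured_biregular_tree X Y V adj VX VY c"
    and X_Int_Y: "X \<inter> Y = {}"
    and two_in_X: "\<exists>a\<in>X. \<exists>b\<in>X. a \<noteq> b" and two_in_Y: "\<exists>a\<in>Y. \<exists>b\<in>Y. a \<noteq> b"
begin

lemma tree: "tree V adj"
  and V_eq: "V = VX \<union> VY"
  and VX_Int_VY: "VX \<inter> VY = {}"
  and adj_bipartite: "\<And>u w. adj u w \<Longrightarrow> (u \<in> VX \<and> w \<in> VY) \<or> (u \<in> VY \<and> w \<in> VX)"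
  and bij_out_arcs_VX: "\<And>v. v \<in> VX \<Longrightarrow> bij_betw c (out_arcs adj v) X"
  and bij_out_arcs_VY: "\<And>v. v \<in> VY \<Longrightarrow> bij_betw c (out_arcs adj v) Y"
  and in_arcs_colour: "\<And>v a b. v \<in> V \<Longrightarrow> a \<in> in_arcs adj v \<Longrightarrow> b \<in> in_arcs adj v \<Longrightarrow> c a = c b"
  using legal unfolding legal_coloured_biregular_tree_def by blast+

lemma adj_sym: "adj u w \<Longrightarrow> adj w u"
  and adj_in_V: "adj u w \<Longrightarrow> u \<in> V \<and> w \<in> V"
  using tree_adj[OF tree] by blast+

definition colours :: "'v \<Rightarrow> 'a set" where
  "colours v = (if v \<in> VX then X else Y)"

lemma bij_out_arcs: "v \<in> V \<Longrightarrow> bij_betw c (out_arcs adj v) (colours v)"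
  using bij_out_arcs_VX bij_out_arcs_VY V_eq by (auto simp: colours_def)

lemma in_arc_colour_eq: "adj a v \<Longrightarrow> adj b v \<Longrightarrow> c (a, v) = c (b, v)"
  using in_arcs_colour[of v "(a, v)" "(b, v)"] adj_in_V by (auto simp: in_arcs_def)

lemma arc_colour: "adj v w \<Longrightarrow> c (v, w) \<in> colours v"
  using bij_out_arcs[of v] adj_in_V[of v w] by (auto simp: bij_betw_def out_arcs_def)

lemma arc_colour_inj:
  assumes "adj v w" "adj v w'" "c (v, w) = c (v, w')"
  shows "w = w'"
proof -
  have "inj_on c (out_arcs adj v)" using bij_out_arcs adj_in_V assms(1) by (simp add: bij_betw_def)
  then have "(v, w) = (v, w')" using assms by (auto simp: out_arcs_def dest: inj_onD)
  then show ?thesis by simp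
qed

lemma arc_colour_surj:
  assumes "v \<in> V" "x \<in> colours v"
  shows "\<exists>w. adj v w \<and> c (v, w) = x"
proof -
  have "x \<in> c ` out_arcs adj v" using bij_out_arcs[OF assms(1)] assms(2) by (simp add: bij_betw_def)
  then show ?thesis by (auto simp: out_arcs_def)
qed

definition neighbour :: "'v \<Rightarrow> 'a \<Rightarrow> 'v" where
  "neighbour v x = (THE w. adj v w \<and> c (v, w) = x)"

lemma neighbour:
  assumes "v \<in> V" "x \<in> colours v"
  shows adj_neighbour: "adj v (neighbour v x)" and colour_neighbour: "c (v, neighbour v x) = x"
proof -
  obtain w where w: "adj v w" "c (v, w) = x" using arc_colour_surj[OF assms] by blast
  then have "neighbour v x = w" unfolding neighbour_def using arc_colour_inj by blast
  with w show "adj v (neighbour v x)" "c (v, neighbour v x) = x" by auto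
qed

lemma neighbour_arc_colour: "adj v w \<Longrightarrow> neighbour v (c (v, w)) = w"
  using neighbour[of v "c (v, w)"] arc_colour[of v w] adj_in_V[of v w] arc_colour_inj by blast

lemma VX_nonempty: "VX \<noteq> {}"
proof -
  obtain v where v: "v \<in> V" using tree by (auto simp: tree_def)
  obtain y where y: "y \<in> Y" using two_in_Y by blast
  show ?thesis
  proof
    assume "VX = {}"
    then have "v \<in> VY" "v \<notin> VX" using v V_eq by auto
    then have "colours v = Y" by (simp add: colours_def)
    then have "adj v (neighbour v y)" using adj_neighbour v y by simp
    then show False using adj_bipartite \<open>VX = {}\<close> by blast
  qed
qed

definition root :: 'v where
  "root = (SOME r. r \<in> VX)"

lemma root_in_VX: "root \<in> VX"
  unfolding root_def using VX_nonempty some_in_eq by blast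

lemma root_in_V: "root \<in> V"
  using root_in_VX V_eq by blast

lemma ex_adj_root: "\<exists>a. adj a root"
proof -
  obtain x where "x \<in> X" using two_in_X by blast
  then have "adj root (neighbour root x)"
    using adj_neighbour root_in_V root_in_VX by (simp add: colours_def)
  then show ?thesis using adj_sym by blast
qed

text \<open>A legal colouring is constant on the arcs entering a vertex, so the choice is irrelevant.\<close>
definition root_colour :: 'a where
  "root_colour = c (SOME a. adj a root, root)"

lemma in_arc_colour_root: "adj a root \<Longrightarrow> c (a, root) = root_colour"
  unfolding root_colour_def using in_arc_colour_eq someI_ex[OF ex_adj_root] by blast

lemma root_colour_in_Y: "root_colour \<in> Y"
proof -
  obtain a where a: "adj a root" using ex_adj_root by blast
  then have "a \<in> VY" using adj_bipartite root_in_VX VX_Int_VY by blast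
  then have "c (a, root) \<in> Y"
    using arc_colour[OF a] VX_Int_VY by (auto simp: colours_def split: if_splits)
  then show ?thesis using in_arc_colour_root[OF a] by simp
qed

definition alphabet :: "nat \<Rightarrow> 'a set" where
  "alphabet i = (if even i then X else Y)"

text \<open>Addresses: the words of colours along non-backtracking walks from the root. Returning along
  the last arc of a walk would use the colour by which its endpoint was entered, i.e. the
  previous-but-one letter, or root_colour after the first step.\<close>
definition admissible :: "'a list \<Rightarrow> bool" where
  "admissible s \<longleftrightarrow> (\<forall>i<length s. s ! i \<in> alphabet i) \<and> nonbacktracking root_colour s"

lemma admissible_Nil [simp]: "admissible []"
  by (simp add: admissible_def nonbacktracking_def)

lemma admissible_take: "admissible s \<Longrightarrow> admissible (take n s)"
  by (simp add: admissible_def nonbacktracking_take)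

lemma admissible_appendD: "admissible (s @ t) \<Longrightarrow> admissible s"
  using admissible_take[of "s @ t" "length s"] by simp

lemma admissible_snoc:
  "admissible (s @ [x]) \<longleftrightarrow>
     admissible s \<and> x \<in> alphabet (length s) \<and> (s \<noteq> [] \<longrightarrow> x \<noteq> last (root_colour # butlast s))"
proof -
  have "(\<forall>i<length (s @ [x]). (s @ [x]) ! i \<in> alphabet i) \<longleftrightarrow>
      (\<forall>i<length s. s ! i \<in> alphabet i) \<and> x \<in> alphabet (length s)"
    by (auto simp: nth_append less_Suc_eq)
  then show ?thesis unfolding admissible_def nonbacktracking_snoc by blast
qed

lemma admissible_snocI:
  "admissible s \<Longrightarrow> x \<in> alphabet (length s) \<Longrightarrow> (s \<noteq> [] \<Longrightarrow> x \<noteq> last (root_colour # butlast s)) \<Longrightarrow>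
    admissible (s @ [x])"
  using admissible_snoc by blast

definition walk :: "'a list \<Rightarrow> 'v" where
  "walk s = foldl neighbour root s"

lemma walk_Nil [simp]: "walk [] = root"
  and walk_snoc [simp]: "walk (s @ [x]) = neighbour (walk s) x"
  by (simp_all add: walk_def)

lemma walk_parity: "admissible s \<Longrightarrow> walk s \<in> (if even (length s) then VX else VY)"
proof (induction s rule: rev_induct)
  case Nil
  then show ?case using root_in_VX by simp
next
  case (snoc x s)
  then have s: "admissible s" and x: "x \<in> alphabet (length s)"
    using admissible_snoc by auto
  have ws: "walk s \<in> (if even (length s) then VX else VY)" using snoc.IH s by blast
  then have "walk s \<in> V" using V_eq by (auto split: if_splits)
  moreover have "colours (walk s) = alphabet (length s)"
    using ws VX_Int_VY by (auto simp: colours_def alphabet_def split: if_splits)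
  ultimately have "adj (walk s) (walk (s @ [x]))" using adj_neighbour x by simp
  then show ?case using ws adj_bipartite VX_Int_VY by (auto split: if_splits)
qed

lemma walk_in_V: "admissible s \<Longrightarrow> walk s \<in> V"
  using walk_parity[of s] V_eq by (auto split: if_splits)

lemma colours_walk: "admissible s \<Longrightarrow> colours (walk s) = alphabet (length s)"
  using walk_parity[of s] VX_Int_VY by (auto simp: colours_def alphabet_def split: if_splits)

lemma walk_step:
  assumes "admissible (s @ [x])"
  shows adj_walk_snoc: "adj (walk s) (walk (s @ [x]))"
    and colour_walk_snoc: "c (walk s, walk (s @ [x])) = x"
proof -
  have s: "admissible s" and "x \<in> alphabet (length s)" using assms admissible_snoc by auto
  then have "x \<in> colours (walk s)" using colours_walk by simp
  then show "adj (walk s) (walk (s @ [x]))" "c (walk s, walk (s @ [x])) = x"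
    using neighbour walk_in_V[OF s] by simp_all
qed

lemma in_arc_colour_walk: "admissible s \<Longrightarrow> adj a (walk s) \<Longrightarrow> c (a, walk s) = last (root_colour # s)"
proof (induction s rule: rev_induct)
  case Nil
  then show ?case using in_arc_colour_root by simp
next
  case (snoc x s)
  have "c (a, walk (s @ [x])) = c (walk s, walk (s @ [x]))"
    using in_arc_colour_eq[OF snoc.prems(2) adj_walk_snoc[OF snoc.prems(1)]] .
  then show ?case using colour_walk_snoc[OF snoc.prems(1)] by simp
qed

lemma admissible_snoc_walk:
  assumes s: "admissible s" and "adj (walk s) w" and not_back: "s \<noteq> [] \<Longrightarrow> w \<noteq> walk (butlast s)"
  shows "admissible (s @ [c (walk s, w)])"
proof -
  have "c (walk s, w) \<in> alphabet (length s)"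
    using arc_colour[OF \<open>adj (walk s) w\<close>] colours_walk[OF s] by simp
  moreover have "c (walk s, w) \<noteq> last (root_colour # butlast s)" if "s \<noteq> []"
  proof -
    obtain s' z where s': "s = s' @ [z]" using \<open>s \<noteq> []\<close> by (cases s rule: rev_cases) auto
    have "adj (walk s) (walk s')" using adj_walk_snoc[of s' z] s s' adj_sym by simp
    then have "c (walk s, walk s') = last (root_colour # s')"
      using in_arc_colour_walk[of s' "walk s"] admissible_appendD s s' adj_sym by blast
    moreover have "c (walk s, w) \<noteq> c (walk s, walk s')"
      using not_back[OF that] arc_colour_inj[OF \<open>adj (walk s) w\<close> \<open>adj (walk s) (walk s')\<close>] s'
      by auto
    ultimately show ?thesis using s' by simp
  qed
  ultimately show ?thesis using s admissible_snoc by blast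
qed

definition walk_path :: "'a list \<Rightarrow> 'v list" where
  "walk_path s = map (\<lambda>i. walk (take i s)) [0..<Suc (length s)]"

lemma length_walk_path: "length (walk_path s) = Suc (length s)"
  by (simp add: walk_path_def)

lemma nth_walk_path: "i \<le> length s \<Longrightarrow> walk_path s ! i = walk (take i s)"
  unfolding walk_path_def by (subst nth_map) (auto simp del: upt_Suc)

lemma reduced_walk_path:
  assumes s: "admissible s"
  shows "reduced_path adj (walk_path s) root (walk s)"
  unfolding reduced_path_def
proof (intro conjI allI impI)
  have ne: "walk_path s \<noteq> []" by (simp add: walk_path_def)
  show "walk_path s \<noteq> []" by (fact ne)
  show "hd (walk_path s) = root" using nth_walk_path[of 0 s] ne by (simp add: hd_conv_nth)
  show "last (walk_path s) = walk s"
    using nth_walk_path[of "length s" s] ne by (simp add: last_conv_nth length_walk_path)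
next
  fix i assume "Suc i < length (walk_path s)"
  then have i: "i < length s" by (simp add: length_walk_path)
  have "admissible (take i s @ [s ! i])"
    using admissible_take[OF s, of "Suc i"] i by (simp add: take_Suc_conv_app_nth)
  then show "adj (walk_path s ! i) (walk_path s ! Suc i)"
    using adj_walk_snoc i by (simp add: nth_walk_path take_Suc_conv_app_nth)
next
  fix i assume "Suc (Suc i) < length (walk_path s)"
  then have i: "Suc i < length s" by (simp add: length_walk_path)
  let ?a = "walk (take i s)" and ?b = "walk (take (Suc i) s)" and ?d = "walk (take (Suc (Suc i)) s)"
  have take_i: "take (Suc i) s = take i s @ [s ! i]"
    "take (Suc (Suc i)) s = take (Suc i) s @ [s ! Suc i]"
    using i by (simp_all add: take_Suc_conv_app_nth)
  have adm: "admissible (take (Suc i) s)" "admissible (take (Suc (Suc i)) s)"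
    using admissible_take[OF s] by blast+
  have "c (?b, ?d) = s ! Suc i" using colour_walk_snoc adm(2) take_i(2) by metis
  moreover have "adj ?a ?b" using adj_walk_snoc adm(1) take_i(1) by metis
  then have "c (?b, ?a) = (root_colour # s) ! i"
    using in_arc_colour_walk[of "take i s" ?b] admissible_take[OF s] adj_sym i
    by (cases i) (auto simp: last_conv_nth)
  moreover have "s ! Suc i \<noteq> (root_colour # s) ! i"
    using s i by (simp add: admissible_def nonbacktracking_def)
  ultimately have "?d \<noteq> ?a" by auto
  then show "walk_path s ! i \<noteq> walk_path s ! Suc (Suc i)" using i by (simp add: nth_walk_path)
qed

lemma walk_inj:
  assumes s: "admissible s" and s': "admissible s'" and eq: "walk s = walk s'"
  shows "s = s'"
proof -
  have "walk_path s = walk_path s'"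
    using tree_unique_path[OF tree root_in_V walk_in_V[OF s]] reduced_walk_path[OF s]
      reduced_walk_path[OF s'] eq
    by auto
  then have len: "length s = length s'" by (metis length_walk_path nat.inject)
  have letter: "s ! i = c (walk_path s ! i, walk_path s ! Suc i)"
    if "admissible s" "i < length s" for s i
  proof -
    have "admissible (take i s @ [s ! i])" using admissible_take[OF that(1), of "Suc i"] that(2)
      by (simp add: take_Suc_conv_app_nth)
    then show ?thesis
      using colour_walk_snoc that(2) by (simp add: nth_walk_path take_Suc_conv_app_nth)
  qed
  show ?thesis
    using len letter[OF s] letter[OF s'] \<open>walk_path s = walk_path s'\<close>
    by (intro nth_equalityI) auto
qed

lemma ex_admissible_walk:
  assumes u: "u \<in> V"
  shows "\<exists>s. admissible s \<and> walk s = u"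
proof -
  obtain p where p: "reduced_path adj p root u" using tree_unique_path[OF tree root_in_V u] by blast
  have ne: "p \<noteq> []" and hd: "p ! 0 = root" and last: "p ! (length p - 1) = u"
    and step: "\<And>i. Suc i < length p \<Longrightarrow> adj (p ! i) (p ! Suc i)"
    and no_return: "\<And>i. Suc (Suc i) < length p \<Longrightarrow> p ! i \<noteq> p ! Suc (Suc i)"
    using p unfolding reduced_path_def by (auto simp: hd_conv_nth last_conv_nth)
  define s where "s = map (\<lambda>i. c (p ! i, p ! Suc i)) [0..<length p - 1]"
  have prefixes: "admissible (take j s) \<and> walk (take j s) = p ! j" if "j < length p" for j
    using that
  proof (induction j rule: less_induct)
    case (less j)
    show ?case
    proof (cases j)
      case 0
      then show ?thesis using hd by simp
    next
      case (Suc i)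
      then have IH: "admissible (take i s)" "walk (take i s) = p ! i" using less by simp_all
      have i: "i < length s" using less.prems Suc by (simp add: s_def)
      then have take_Suc: "take (Suc i) s = take i s @ [c (p ! i, p ! Suc i)]"
        by (simp add: take_Suc_conv_app_nth s_def)
      have a: "adj (walk (take i s)) (p ! Suc i)" using step less.prems Suc IH(2) by simp
      have "p ! Suc i \<noteq> walk (butlast (take i s))" if ne: "take i s \<noteq> []"
      proof -
        obtain k where k: "i = Suc k" using ne by (cases i) auto
        have "butlast (take i s) = take k s" using k i by (simp add: butlast_take)
        moreover have "walk (take k s) = p ! k" using less.IH[of k] less.prems Suc k by simp
        ultimately show ?thesis using no_return[of k] less.prems Suc k by simp
      qed
      then have "admissible (take (Suc i) s)"
        using admissible_snoc_walk[OF IH(1) a] IH(2) take_Suc by simp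
      moreover have "walk (take (Suc i) s) = p ! Suc i"
        using take_Suc IH(2) neighbour_arc_colour step less.prems Suc by simp
      ultimately show ?thesis using Suc by simp
    qed
  qed
  have "length s = length p - 1" by (simp add: s_def)
  then show ?thesis using prefixes[of "length p - 1"] ne last by auto
qed

definition address :: "'v \<Rightarrow> 'a list" where
  "address u = (THE s. admissible s \<and> walk s = u)"

lemma address:
  assumes "u \<in> V"
  shows admissible_address: "admissible (address u)" and walk_address: "walk (address u) = u"
proof -
  obtain s where s: "admissible s" "walk s = u" using ex_admissible_walk assms by blast
  have "admissible (address u) \<and> walk (address u) = u"
    unfolding address_def by (rule theI[of _ s]) (use s walk_inj in blast)+
  then show "admissible (address u)" "walk (address u) = u" by simp_all
qed

lemma address_walk: "admissible s \<Longrightarrow> address (walk s) = s"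
  using address[OF walk_in_V] walk_inj by blast

lemma address_adj:
  assumes u: "u \<in> V" and a: "adj u w"
  shows "(address u \<noteq> [] \<and> address w = butlast (address u)) \<or>
    (admissible (address u @ [c (u, w)]) \<and> address w = address u @ [c (u, w)])"
proof (cases "address u \<noteq> [] \<and> w = walk (butlast (address u))")
  case True
  then have "admissible (butlast (address u))"
    using admissible_address[OF u] admissible_take by (simp add: butlast_conv_take)
  then show ?thesis using True address_walk by auto
next
  case False
  then have adm: "admissible (address u @ [c (u, w)])"
    using admissible_snoc_walk[OF admissible_address[OF u]] a walk_address[OF u] by auto
  moreover have "walk (address u @ [c (u, w)]) = w"
    using walk_address[OF u] neighbour_arc_colour[OF a] by simp
  ultimately show ?thesis using address_walk by metis
qed

lemma countable_V:
  assumes "countable X" "countable Y"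
  shows "countable V"
proof -
  have "V \<subseteq> walk ` lists (X \<union> Y)"
  proof
    fix u assume u: "u \<in> V"
    have "address u \<in> lists (X \<union> Y)"
      using admissible_address[OF u]
      by (auto simp: admissible_def alphabet_def in_set_conv_nth split: if_splits)
    then show "u \<in> walk ` lists (X \<union> Y)"
      by (rule image_eqI[where f = walk, OF walk_address[OF u, symmetric]])
  qed
  then show ?thesis by (rule countable_subset) (simp add: assms)
qed

section \<open>The group U_c(M,N) and the semi-regular case\<close>

lemma tree_aut_adj: "tree_aut V adj g \<Longrightarrow> adj u w \<Longrightarrow> adj (g u) (g w)"
  using adj_in_V unfolding tree_aut_def by blast

lemma tree_aut_eq_if_agree_on_VY:
  assumes g: "tree_aut V adj g" and h: "tree_aut V adj h" and agree: "\<And>v. v \<in> VY \<Longrightarrow> g v = h v"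
  shows "g = h"
proof
  fix v
  show "g v = h v"
  proof (cases "v \<in> VX")
    case True
    then have v: "v \<in> V" "colours v = X" using V_eq by (auto simp: colours_def)
    obtain x x' where x: "x \<in> X" "x' \<in> X" "x \<noteq> x'" using two_in_X by blast
    define w w' where "w = neighbour v x" and "w' = neighbour v x'"
    have a: "adj v w" "adj v w'" using adj_neighbour v x unfolding w_def w'_def by simp_all
    have "w \<noteq> w'" using colour_neighbour v x unfolding w_def w'_def by metis
    then have "g w \<noteq> g w'" using g a adj_in_V unfolding tree_aut_def by (metis permutes_inj inj_eq)
    moreover have "w \<in> VY" "w' \<in> VY" using a adj_bipartite True VX_Int_VY by blast+
    ultimately show ?thesis
      using tree_common_neighbour_unique[OF tree] tree_aut_adj[OF g] tree_aut_adj[OF h] a agree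
      by metis
  next
    case False
    then show ?thesis
      using agree g h V_eq permutes_not_in unfolding tree_aut_def by (metis UnE)
  qed
qed

lemma local_action_arc_colour:
  assumes "v \<in> V" "adj v w"
  shows "local_action adj c g v (c (v, w)) = c (g v, g w)"
proof -
  have inj: "inj_on c (out_arcs adj v)" using bij_out_arcs[OF assms(1)] by (simp add: bij_betw_def)
  have "(v, w) \<in> out_arcs adj v" using assms(2) by (simp add: out_arcs_def)
  then show ?thesis using inv_into_f_f[OF inj] unfolding local_action_def by auto
qed

lemma local_action_outside_colours:
  "v \<in> V \<Longrightarrow> x \<notin> colours v \<Longrightarrow> local_action adj c g v x = x"
  using bij_out_arcs unfolding local_action_def bij_betw_def by auto

lemma U_cD:
  assumes "g \<in> U_c V adj VX VY c M N"
  shows U_c_tree_aut: "tree_aut V adj g"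
    and U_c_permutes: "g permutes V"
    and U_c_local_action: "v \<in> V \<Longrightarrow> local_action adj c g v \<in> (if v \<in> VX then M else N)"
  using assms V_eq VX_Int_VY unfolding U_c_def tree_aut_def by auto

lemma inj_on_restrict_VY_U_c: "inj_on (\<lambda>g v. if v \<in> VY then g v else v) (U_c V adj VX VY c M N)"
proof (rule inj_onI)
  fix g h assume "g \<in> U_c V adj VX VY c M N" "h \<in> U_c V adj VX VY c M N"
    and "(\<lambda>v. if v \<in> VY then g v else v) = (\<lambda>v. if v \<in> VY then h v else v)"
  then show "g = h" using tree_aut_eq_if_agree_on_VY U_c_tree_aut by (metis (mono_tags))
qed

lemma box_product_eqpoll_U_c: "box_product V adj VX VY c M N \<approx> U_c V adj VX VY c M N"
  unfolding box_product_def using inj_on_restrict_VY_U_c by (rule inj_on_image_eqpoll_self)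

text \<open>The local action at v determines the image of the arc to a neighbour w; the image of the
  reverse arc then determines, by semi-regularity, the local action at w.\<close>
lemma U_c_agree_along_arc:
  assumes M: "perm_group M X" "semi_regular M X" and N: "perm_group N Y" "semi_regular N Y"
    and g: "g \<in> U_c V adj VX VY c M N" and h: "h \<in> U_c V adj VX VY c M N"
    and a: "adj v w" and agree: "g v = h v" "local_action adj c g v = local_action adj c h v"
  shows "g w = h w \<and> local_action adj c g w = local_action adj c h w"
proof
  have V: "v \<in> V" "w \<in> V" using adj_in_V[OF a] by simp_all
  have "c (g v, g w) = c (h v, h w)"
    using local_action_arc_colour[OF V(1) a, of g] local_action_arc_colour[OF V(1) a, of h] agree
    by simp
  then show gw: "g w = h w"
    using arc_colour_inj tree_aut_adj[OF U_c_tree_aut[OF g] a] tree_aut_adj[OF U_c_tree_aut[OF h] a]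
      agree(1)
    by metis
  have same_colour: "local_action adj c g w (c (w, v)) = local_action adj c h w (c (w, v))"
    using local_action_arc_colour[OF V(2) adj_sym[OF a]] gw agree(1) by simp
  have colour: "c (w, v) \<in> colours w" using arc_colour adj_sym[OF a] by blast
  show "local_action adj c g w = local_action adj c h w"
  proof (cases "w \<in> VX")
    case True
    then show ?thesis
      using semi_regular_eq_if_agree[OF M] U_c_local_action[OF g V(2)] U_c_local_action[OF h V(2)]
        same_colour colour by (simp add: colours_def)
  next
    case False
    then show ?thesis
      using semi_regular_eq_if_agree[OF N] U_c_local_action[OF g V(2)] U_c_local_action[OF h V(2)]
        same_colour colour by (simp add: colours_def)
  qed
qed

lemma U_c_eq_if_agree_at_root:
  assumes M: "perm_group M X" "semi_regular M X" and N: "perm_group N Y" "semi_regular N Y"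
    and g: "g \<in> U_c V adj VX VY c M N" and h: "h \<in> U_c V adj VX VY c M N"
    and root: "g root = h root" "local_action adj c g root = local_action adj c h root"
  shows "g = h"
proof
  fix u
  have agree:
    "g (walk s) = h (walk s) \<and> local_action adj c g (walk s) = local_action adj c h (walk s)"
    if "admissible s" for s
    using that
  proof (induction s rule: rev_induct)
    case Nil
    then show ?case using root by simp
  next
    case (snoc x s)
    then show ?case
      using U_c_agree_along_arc[OF M N g h adj_walk_snoc[OF snoc.prems]] admissible_appendD by blast
  qed
  show "g u = h u"
  proof (cases "u \<in> V")
    case True
    then show ?thesis using agree[OF admissible_address[OF True]] walk_address[OF True] by simp
  next
    case False
    then show ?thesis using permutes_not_in U_c_permutes[OF g] U_c_permutes[OF h] by metis
  qed
qed

lemma countable_U_c: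
  assumes M: "perm_group M X" "semi_regular M X" and N: "perm_group N Y" "semi_regular N Y"
    and "countable X" "countable Y"
  shows "countable (U_c V adj VX VY c M N)"
proof (rule countable_image_inj_on)
  let ?U = "U_c V adj VX VY c M N"
  obtain x where "x \<in> X" using two_in_X by blast
  have "countable M" by (rule countable_semi_regular[OF M \<open>countable X\<close> \<open>x \<in> X\<close>])
  have "(\<lambda>g. (g root, local_action adj c g root)) ` ?U \<subseteq> V \<times> M"
    using U_c_permutes U_c_local_action root_in_V root_in_VX permutes_in_image by fastforce
  moreover have "countable (V \<times> M)" using countable_V[OF assms(5,6)] \<open>countable M\<close> by simp
  ultimately show "countable ((\<lambda>g. (g root, local_action adj c g root)) ` ?U)"
    by (rule countable_subset)
  show "inj_on (\<lambda>g. (g root, local_action adj c g root)) ?U"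
    using U_c_eq_if_agree_at_root[OF M N] by (auto intro: inj_onI)
qed

section \<open>Twisted automorphisms\<close>

definition twist_compatible :: "'a list set \<Rightarrow> ('a \<Rightarrow> 'a) \<Rightarrow> bool" where
  "twist_compatible T \<sigma> \<longleftrightarrow> prefix_antichain T \<and> \<sigma> permutes X \<and>
     (\<forall>t\<in>T. 2 \<le> length t \<and> (\<forall>x\<in>set (drop (length t - 2) t). \<sigma> x = x))"

lemma permutes_X_alphabet: "\<sigma> permutes X \<Longrightarrow> x \<in> alphabet i \<Longrightarrow> \<sigma> x \<in> alphabet i"
  using X_Int_Y permutes_in_image permutes_not_in by (fastforce simp: alphabet_def)

lemma twist_compatible_inv: "twist_compatible T \<sigma> \<Longrightarrow> twist_compatible T (inv \<sigma>)"
  unfolding twist_compatible_def using permutes_inv permutes_inv_eq by metis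

text \<open>Only letters from position length t on change. The non-backtracking constraints that compare
  a changed with an unchanged letter involve one of the last two letters of t, which \<sigma> fixes.\<close>
lemma admissible_twist:
  assumes T: "twist_compatible T \<sigma>" and s: "admissible s"
  shows "admissible (twist T \<sigma> s)"
proof (cases "\<exists>t\<in>T. prefix t s")
  case False
  then show ?thesis using s twist_no_prefix by metis
next
  case True
  then obtain t where t: "t \<in> T" "prefix t s" by blast
  have ac: "prefix_antichain T" and \<sigma>: "\<sigma> permutes X" and t2: "2 \<le> length t"
    and fixed: "\<forall>x\<in>set (drop (length t - 2) t). \<sigma> x = x"
    using T t unfolding twist_compatible_def by auto
  obtain u where u: "s = t @ u" using t by (auto simp: prefix_def)
  have twist_s: "twist T \<sigma> s = t @ map \<sigma> u" using twist_beyond_prefix[OF ac t] u by simp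
  have "(t @ map \<sigma> u) ! i \<in> alphabet i" if "i < length s" for i
  proof -
    have "s ! i \<in> alphabet i" using s that by (simp add: admissible_def)
    then show ?thesis
      using that permutes_X_alphabet[OF \<sigma>] unfolding u
      by (cases "i < length t") (simp_all add: nth_append)
  qed
  then have letters: "twist T \<sigma> s ! i \<in> alphabet i" if "i < length s" for i
    using that twist_s by simp
  have "(k # twist T \<sigma> s) ! Suc (Suc i) \<noteq> (k # twist T \<sigma> s) ! i"
    if len: "Suc (Suc i) \<le> length s" and ne: "(k # s) ! Suc (Suc i) \<noteq> (k # s) ! i" for i k
  proof (cases "Suc (Suc i) \<le> length t")
    case True
    have "(k # twist T \<sigma> s) ! j = (k # s) ! j" if "j = i \<or> j = Suc (Suc i)" for j
      by (rule nth_Cons_twist_upto_prefix[OF ac t]) (use True that in auto)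
    then show ?thesis using ne by metis
  next
    case False
    have "(k # twist T \<sigma> s) ! j = \<sigma> ((k # s) ! j)" if "j = i \<or> j = Suc (Suc i)" for j
      by (rule nth_Cons_twist_beyond_prefix[OF ac t _ _ fixed t2]) (use False that len in auto)
    then show ?thesis using ne permutes_inj[OF \<sigma>] by (metis inj_eq)
  qed
  then have "nonbacktracking root_colour (twist T \<sigma> s)"
    using s unfolding admissible_def nonbacktracking_def by simp
  then show ?thesis using letters unfolding admissible_def by simp
qed

definition twist_aut :: "'a list set \<Rightarrow> ('a \<Rightarrow> 'a) \<Rightarrow> 'v \<Rightarrow> 'v" where
  "twist_aut T \<sigma> v = (if v \<in> V then walk (twist T \<sigma> (address v)) else v)"

lemma twist_aut_vertex:
  assumes "twist_compatible T \<sigma>" "v \<in> V"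
  shows twist_aut_in_V: "twist_aut T \<sigma> v \<in> V"
    and address_twist_aut: "address (twist_aut T \<sigma> v) = twist T \<sigma> (address v)"
  using admissible_twist[OF assms(1) admissible_address[OF assms(2)]] assms(2)
  by (simp_all add: twist_aut_def walk_in_V address_walk)

lemma twist_aut_inv_left:
  assumes T: "twist_compatible T \<sigma>" and v: "v \<in> V"
  shows "twist_aut T (inv \<sigma>) (twist_aut T \<sigma> v) = v"
proof -
  have "prefix_antichain T" "\<sigma> permutes X" using T by (simp_all add: twist_compatible_def)
  then show ?thesis
    using twist_aut_in_V[OF T v] address_twist_aut[OF T v] v
    by (simp add: twist_aut_def twist_twist permutes_inv_o walk_address)
qed

lemma twist_aut_inv_right:
  assumes T: "twist_compatible T \<sigma>" and v: "v \<in> V"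
  shows "twist_aut T \<sigma> (twist_aut T (inv \<sigma>) v) = v"
proof -
  have "inv (inv \<sigma>) = \<sigma>" using T permutes_inv_inv unfolding twist_compatible_def by blast
  then show ?thesis using twist_aut_inv_left[OF twist_compatible_inv[OF T] v] by simp
qed

lemma adj_twist_aut:
  assumes T: "twist_compatible T \<sigma>" and "adj u w"
  shows "adj (twist_aut T \<sigma> u) (twist_aut T \<sigma> w)"
proof -
  have step: "adj (walk (twist T \<sigma> s)) (walk (twist T \<sigma> (s @ [x])))"
    if "admissible (s @ [x])" for s x
    using adj_walk_snoc admissible_twist[OF T that] by simp
  have u: "u \<in> V" and w: "w \<in> V" using adj_in_V[OF \<open>adj u w\<close>] by simp_all
  from address_adj[OF u \<open>adj u w\<close>] show ?thesis
  proof
    assume "address u \<noteq> [] \<and> address w = butlast (address u)"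
    then obtain z where z: "address u = address w @ [z]" by (metis append_butlast_last_id)
    then have "adj (twist_aut T \<sigma> w) (twist_aut T \<sigma> u)"
      using step[of "address w" z] admissible_address[OF u] u w by (simp add: twist_aut_def)
    then show ?thesis using adj_sym by blast
  next
    assume "admissible (address u @ [c (u, w)]) \<and> address w = address u @ [c (u, w)]"
    then show ?thesis using step u w by (simp add: twist_aut_def)
  qed
qed

lemma tree_aut_twist_aut:
  assumes T: "twist_compatible T \<sigma>"
  shows "tree_aut V adj (twist_aut T \<sigma>)"
proof -
  have T': "twist_compatible T (inv \<sigma>)" using twist_compatible_inv[OF T] .
  have "bij_betw (twist_aut T \<sigma>) V V"
    by (rule bij_betw_byWitness[where f' = "twist_aut T (inv \<sigma>)"])
      (use twist_aut_inv_left[OF T] twist_aut_inv_right[OF T] twist_aut_in_V[OF T]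
        twist_aut_in_V[OF T'] in auto)
  then have "twist_aut T \<sigma> permutes V" by (rule bij_imp_permutes) (simp add: twist_aut_def)
  moreover have "adj u w \<longleftrightarrow> adj (twist_aut T \<sigma> u) (twist_aut T \<sigma> w)" if "u \<in> V" "w \<in> V" for u w
    using adj_twist_aut[OF T] adj_twist_aut[OF T', of "twist_aut T \<sigma> u" "twist_aut T \<sigma> w"]
      twist_aut_inv_left[OF T] that by auto
  ultimately show ?thesis unfolding tree_aut_def by blast
qed

lemma twist_aut_VX:
  assumes T: "twist_compatible T \<sigma>"
  shows "twist_aut T \<sigma> ` VX = VX"
proof -
  have into: "twist_aut T \<tau> v \<in> VX" if "twist_compatible T \<tau>" "v \<in> VX" for \<tau> v
  proof -
    have v: "v \<in> V" using that(2) V_eq by blast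
    have "even (length (address v))"
      using walk_parity[OF admissible_address[OF v]] walk_address[OF v] that(2) VX_Int_VY
      by (auto split: if_splits)
    then show ?thesis
      using walk_parity[OF admissible_twist[OF that(1) admissible_address[OF v]]] v
      by (simp add: twist_aut_def)
  qed
  have "v \<in> twist_aut T \<sigma> ` VX" if "v \<in> VX" for v
  proof -
    have "v = twist_aut T \<sigma> (twist_aut T (inv \<sigma>) v)"
      using twist_aut_inv_right[OF T] that V_eq by simp
    then show ?thesis using into[OF twist_compatible_inv[OF T] that] by (rule image_eqI)
  qed
  then show ?thesis using into[OF T] by blast
qed

lemma colour_twist_forward:
  assumes T: "twist_compatible T \<sigma>" and s: "admissible (s @ [x])"
  shows "c (walk (twist T \<sigma> s), walk (twist T \<sigma> (s @ [x]))) = (if \<exists>t\<in>T. prefix t s then \<sigma> x else x)"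
  using colour_walk_snoc admissible_twist[OF T s] by simp

lemma colour_twist_backward:
  assumes T: "twist_compatible T \<sigma>" and s: "admissible (s @ [z])"
  shows "c (walk (twist T \<sigma> (s @ [z])), walk (twist T \<sigma> s)) =
    (if \<exists>t\<in>T. prefix t (s @ [z]) then \<sigma> (last (root_colour # s)) else last (root_colour # s))"
proof -
  have ac: "prefix_antichain T" using T by (simp add: twist_compatible_def)
  have "adj (walk (twist T \<sigma> s)) (walk (twist T \<sigma> (s @ [z])))"
    using adj_walk_snoc admissible_twist[OF T s] by simp
  then have "c (walk (twist T \<sigma> (s @ [z])), walk (twist T \<sigma> s)) = last (root_colour # twist T \<sigma> s)"
    using in_arc_colour_walk[OF admissible_twist[OF T admissible_appendD[OF s]]] adj_sym by blast
  also have "\<dots> = (root_colour # twist T \<sigma> (s @ [z])) ! length s"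
    using nth_Cons_append_length[of root_colour "twist T \<sigma> s"] by simp
  also have "\<dots> = (if \<exists>t\<in>T. prefix t (s @ [z]) then \<sigma> ((root_colour # s @ [z]) ! length s)
      else (root_colour # s @ [z]) ! length s)"
  proof (cases "\<exists>t\<in>T. prefix t (s @ [z])")
    case True
    then obtain t where t: "t \<in> T" "prefix t (s @ [z])" by blast
    have "length t \<le> Suc (length s)" using prefix_length_le[OF t(2)] by simp
    then have "(root_colour # twist T \<sigma> (s @ [z])) ! length s =
        \<sigma> ((root_colour # s @ [z]) ! length s)"
      by (intro nth_Cons_twist_beyond_prefix[OF ac t])
        (use T t in \<open>auto simp: twist_compatible_def\<close>)
    then show ?thesis using True by simp
  next
    case False
    then show ?thesis using twist_no_prefix by metis
  qed
  also have "(root_colour # s @ [z]) ! length s = last (root_colour # s)"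
    by (rule nth_Cons_append_length)
  finally show ?thesis .
qed

lemma local_action_twist_aut:
  assumes T: "twist_compatible T \<sigma>" and v: "v \<in> V" and x: "x \<in> colours v"
  shows "local_action adj c (twist_aut T \<sigma>) v x = (if \<exists>t\<in>T. prefix t (address v) then \<sigma> x else x)"
proof -
  obtain w where a: "adj v w" and x_eq: "x = c (v, w)" using arc_colour_surj[OF v x] by metis
  have w: "w \<in> V" using adj_in_V[OF a] by simp
  have "local_action adj c (twist_aut T \<sigma>) v x = c (twist_aut T \<sigma> v, twist_aut T \<sigma> w)"
    using local_action_arc_colour[OF v a] x_eq by simp
  also have "\<dots> = c (walk (twist T \<sigma> (address v)), walk (twist T \<sigma> (address w)))"
    using v w by (simp add: twist_aut_def)
  also have "\<dots> = (if \<exists>t\<in>T. prefix t (address v) then \<sigma> x else x)"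
    using address_adj[OF v a]
  proof
    assume "address v \<noteq> [] \<and> address w = butlast (address v)"
    then obtain z where split: "address v = address w @ [z]" by (metis append_butlast_last_id)
    have "x = last (root_colour # address w)"
      using in_arc_colour_walk[OF admissible_address[OF w], of v] walk_address[OF w] a x_eq
      by simp
    then show ?thesis
      using colour_twist_backward[OF T, of "address w" z] admissible_address[OF v] split
      by simp
  next
    assume "admissible (address v @ [c (v, w)]) \<and> address w = address v @ [c (v, w)]"
    then show ?thesis using colour_twist_forward[OF T] x_eq by simp
  qed
  finally show ?thesis .
qed

lemma twist_aut_in_U_c:
  assumes T: "twist_compatible T \<sigma>" and "\<sigma> \<in> M" "id \<in> M" "id \<in> N"
  shows "twist_aut T \<sigma> \<in> U_c V adj VX VY c M N"
proof -
  have \<sigma>: "\<sigma> permutes X" using T by (simp add: twist_compatible_def)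
  have "local_action adj c (twist_aut T \<sigma>) v \<in> M" if "v \<in> VX" for v
  proof -
    have v: "v \<in> V" "colours v = X" using that V_eq by (auto simp: colours_def)
    have "local_action adj c (twist_aut T \<sigma>) v = (if \<exists>t\<in>T. prefix t (address v) then \<sigma> else id)"
    proof
      fix x
      show "local_action adj c (twist_aut T \<sigma>) v x =
          (if \<exists>t\<in>T. prefix t (address v) then \<sigma> else id) x"
        using local_action_twist_aut[OF T v(1), of x] local_action_outside_colours[OF v(1), of x]
          v(2)
          permutes_not_in[OF \<sigma>, of x] by (cases "x \<in> X") auto
    qed
    then show ?thesis using assms(2,3) by simp
  qed
  moreover have "local_action adj c (twist_aut T \<sigma>) v \<in> N" if "v \<in> VY" for v
  proof -
    have v: "v \<in> V" "colours v = Y" using that V_eq VX_Int_VY by (auto simp: colours_def)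
    have "local_action adj c (twist_aut T \<sigma>) v = id"
    proof
      fix x
      show "local_action adj c (twist_aut T \<sigma>) v x = id x"
        using local_action_twist_aut[OF T v(1), of x] local_action_outside_colours[OF v(1), of x]
          v(2) permutes_not_in[OF \<sigma>, of x] X_Int_Y by (cases "x \<in> Y") auto
    qed
    then show ?thesis using assms(4) by simp
  qed
  ultimately show ?thesis
    unfolding U_c_def using tree_aut_twist_aut[OF T] twist_aut_VX[OF T] by blast
qed

context
  fixes \<sigma> :: "'a \<Rightarrow> 'a" and x0 x1 y0 :: 'a
  assumes \<sigma>: "\<sigma> permutes X" and x0: "x0 \<in> X" "\<sigma> x0 = x0" and x1: "x1 \<in> X" "\<sigma> x1 \<noteq> x1"
    and y0: "y0 \<in> Y" "y0 \<noteq> root_colour"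
begin

definition blocks :: "nat \<Rightarrow> 'a list" where
  "blocks n = concat (replicate n [x1, y0, \<sigma> x1, root_colour])"

definition marker :: "nat \<Rightarrow> 'a list" where
  "marker n = blocks n @ [x0, y0]"

lemma length_blocks: "length (blocks n) = 4 * n"
  by (induction n) (simp_all add: blocks_def)

lemma blocks_Suc: "blocks (Suc n) = blocks n @ [x1, y0, \<sigma> x1, root_colour]"
  by (simp add: blocks_def replicate_append_same[symmetric])

lemma admissible_blocks:
  "admissible (blocks n) \<and> last (root_colour # blocks n) = root_colour \<and>
     (blocks n \<noteq> [] \<longrightarrow> last (root_colour # butlast (blocks n)) = \<sigma> x1)"
proof (induction n)
  case 0
  then show ?case by (simp add: blocks_def)
next
  case (Suc n)
  let ?b = "blocks n"
  have x1': "\<sigma> x1 \<in> X" "\<sigma> x1 \<noteq> x1" using x1 permutes_in_image[OF \<sigma>] by auto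
  have even: "even (length ?b)" by (simp add: length_blocks)
  have "admissible (?b @ [x1])"
    by (rule admissible_snocI) (use Suc.IH x1 x1' even in \<open>auto simp: alphabet_def butlast_append\<close>)
  then have "admissible ((?b @ [x1]) @ [y0])"
    by (rule admissible_snocI) (use Suc.IH y0 even in \<open>auto simp: alphabet_def butlast_append\<close>)
  then have "admissible (((?b @ [x1]) @ [y0]) @ [\<sigma> x1])"
    by (rule admissible_snocI) (use x1' even in \<open>auto simp: alphabet_def butlast_append\<close>)
  then have "admissible ((((?b @ [x1]) @ [y0]) @ [\<sigma> x1]) @ [root_colour])"
    by (rule admissible_snocI)
      (use root_colour_in_Y y0 even in \<open>auto simp: alphabet_def butlast_append\<close>)
  then show ?case by (simp add: blocks_Suc butlast_append)
qed

lemma admissible_marker_x1: "admissible (marker n @ [x1])"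
proof -
  have b: "admissible (blocks n)" "last (root_colour # blocks n) = root_colour"
    "blocks n \<noteq> [] \<Longrightarrow> last (root_colour # butlast (blocks n)) = \<sigma> x1"
    using admissible_blocks by auto
  have x0x1: "x0 \<noteq> \<sigma> x1" "x0 \<noteq> x1" using x0 x1 permutes_inj[OF \<sigma>] by (metis inj_eq)+
  have even: "even (length (blocks n))" by (simp add: length_blocks)
  have "admissible (blocks n @ [x0])"
    by (rule admissible_snocI) (use b x0 x0x1 even in \<open>auto simp: alphabet_def butlast_append\<close>)
  then have "admissible ((blocks n @ [x0]) @ [y0])"
    by (rule admissible_snocI) (use b y0 even in \<open>auto simp: alphabet_def butlast_append\<close>)
  then have "admissible (((blocks n @ [x0]) @ [y0]) @ [x1])"
    by (rule admissible_snocI) (use x1 x0x1 even in \<open>auto simp: alphabet_def butlast_append\<close>)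
  then show ?thesis by (simp add: marker_def)
qed

lemma marker_prefix_eq:
  assumes "prefix (marker n) (marker m)"
  shows "n = m"
proof (rule ccontr)
  assume "n \<noteq> m"
  moreover have "n \<le> m" using prefix_length_le[OF assms] by (simp add: marker_def length_blocks)
  ultimately obtain k where "m = Suc (n + k)" using less_imp_Suc_add by fastforce
  then have m: "m = n + Suc k" by simp
  have "blocks m = blocks n @ [x1, y0, \<sigma> x1, root_colour] @ blocks k"
    unfolding m blocks_def replicate_add concat_append by simp
  then have "x0 = x1" using assms by (auto simp: marker_def prefix_def)
  then show False using x0 x1 by simp
qed

lemma marker_prefix_antichain: "prefix_antichain (marker ` S)"
  unfolding prefix_antichain_def using marker_prefix_eq by blast

lemma twist_compatible_markers: "twist_compatible (marker ` S) \<sigma>"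
  unfolding twist_compatible_def
  using marker_prefix_antichain \<sigma> x0 y0 X_Int_Y permutes_not_in[OF \<sigma>]
  by (auto simp: marker_def length_blocks)

lemma twist_aut_markers_differ:
  assumes "n \<in> S" "n \<notin> S'"
  shows "twist_aut (marker ` S) \<sigma> \<noteq> twist_aut (marker ` S') \<sigma>"
proof -
  let ?s = "marker n @ [x1]"
  have adm: "admissible ?s" by (rule admissible_marker_x1)
  have V: "walk ?s \<in> V" and addr: "address (walk ?s) = ?s"
    using walk_in_V[OF adm] address_walk[OF adm] by simp_all
  have twisted: "twist (marker ` S) \<sigma> ?s = marker n @ [\<sigma> x1]"
    using twist_beyond_prefix[OF marker_prefix_antichain, of "marker n" S ?s \<sigma>] assms(1) by simp
  then have in_S: "twist_aut (marker ` S) \<sigma> (walk ?s) = walk (marker n @ [\<sigma> x1])"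
    using V addr by (simp add: twist_aut_def)
  have "\<not> prefix (marker m) ?s" if "m \<in> S'" for m
  proof
    assume "prefix (marker m) ?s"
    moreover have "length (marker m) \<noteq> length ?s" by (simp add: marker_def length_blocks) presburger
    ultimately have "prefix (marker m) (marker n)" by auto
    then show False using marker_prefix_eq assms(2) that by blast
  qed
  then have "twist_aut (marker ` S') \<sigma> (walk ?s) = walk ?s"
    using V addr twist_no_prefix[of "marker ` S'" ?s \<sigma>] by (auto simp: twist_aut_def)
  moreover have "walk (marker n @ [\<sigma> x1]) \<noteq> walk ?s"
  proof
    assume "walk (marker n @ [\<sigma> x1]) = walk ?s"
    moreover have "admissible (marker n @ [\<sigma> x1])"
      using admissible_twist[OF twist_compatible_markers[of S] adm] unfolding twisted .
    ultimately show False using walk_inj adm x1 by fastforce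
  qed
  ultimately show ?thesis using in_S by metis
qed

end

lemma nat_set_lepoll_U_c_if_not_semi_regular:
  assumes M: "perm_group M X" "\<not> semi_regular M X" and "id \<in> N"
  shows "(UNIV :: nat set set) \<lesssim> U_c V adj VX VY c M N"
proof -
  obtain \<sigma> x0 where \<sigma>M: "\<sigma> \<in> M" and x0: "x0 \<in> X" "\<sigma> x0 = x0" and "\<sigma> \<noteq> id"
    using M(2) unfolding semi_regular_def by blast
  have \<sigma>: "\<sigma> permutes X" using perm_group_permutes[OF M(1) \<sigma>M] .
  obtain x1 where x1: "x1 \<in> X" "\<sigma> x1 \<noteq> x1"
    using \<open>\<sigma> \<noteq> id\<close> permutes_not_in[OF \<sigma>] by (metis eq_id_iff)
  obtain y0 where y0: "y0 \<in> Y" "y0 \<noteq> root_colour" using two_in_Y by metis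
  let ?F = "\<lambda>S. twist_aut (marker \<sigma> x0 x1 y0 ` S) \<sigma>"
  have "inj ?F"
  proof (rule injI, rule ccontr)
    fix S S' :: "nat set" assume "?F S = ?F S'" "S \<noteq> S'"
    then obtain n where "n \<in> S \<and> n \<notin> S' \<or> n \<in> S' \<and> n \<notin> S" by blast
    then show False
      using twist_aut_markers_differ[OF \<sigma> x0 x1 y0] \<open>?F S = ?F S'\<close> by metis
  qed
  moreover have "range ?F \<subseteq> U_c V adj VX VY c M N"
    using twist_aut_in_U_c[OF twist_compatible_markers[OF \<sigma> x0 x1 y0] \<sigma>M
        perm_group_id[OF M(1)] \<open>id \<in> N\<close>]
    by blast
  ultimately show ?thesis unfolding lepoll_def by blast
qed

lemma U_c_lepoll_nat_set:
  assumes "countable X" "countable Y"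
  shows "U_c V adj VX VY c M N \<lesssim> (UNIV :: nat set set)"
proof -
  have "U_c V adj VX VY c M N \<subseteq> {f. f permutes V}" using U_c_permutes by blast
  then show ?thesis
    using permutations_lepoll_nat_set[OF countable_V[OF assms]] subset_imp_lepoll lepoll_trans
    by blast
qed

end

lemma coloured_tree_swap: "coloured_tree X Y V VX VY adj c \<Longrightarrow> coloured_tree Y X V VY VX adj c"
  unfolding coloured_tree_def legal_coloured_biregular_tree_def by blast

lemma (in coloured_tree) U_c_swap: "U_c V adj VY VX c N M = U_c V adj VX VY c M N"
proof -
  have swap: "g ` VY = VY \<longleftrightarrow> g ` VX = VX" if "tree_aut V adj g" for g
  proof -
    have g: "g permutes V" using that by (simp add: tree_aut_def)
    have VY: "VY = V - VX" using V_eq VX_Int_VY by blast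
    then have img: "g ` VY = V - g ` VX"
      using image_set_diff[OF permutes_inj[OF g]] permutes_image[OF g] by simp
    have "g ` VX \<subseteq> V" using permutes_image[OF g] V_eq by blast
    then show ?thesis unfolding img using VY V_eq by blast
  qed
  show ?thesis
    unfolding U_c_def by (rule Collect_cong) (use swap in blast)
qed

lemma nat_set_lepoll_U_c:
  assumes T: "coloured_tree X Y V VX VY adj c" and M: "perm_group M X" and N: "perm_group N Y"
    and not_both: "\<not> (semi_regular M X \<and> semi_regular N Y)"
  shows "(UNIV :: nat set set) \<lesssim> U_c V adj VX VY c M N"
proof (cases "semi_regular M X")
  case False
  then show ?thesis
    using coloured_tree.nat_set_lepoll_U_c_if_not_semi_regular[OF T M] perm_group_id[OF N] by blast
next
  case True
  then have "\<not> semi_regular N Y" using not_both by blast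
  then have "(UNIV :: nat set set) \<lesssim> U_c V adj VY VX c N M"
    using coloured_tree.nat_set_lepoll_U_c_if_not_semi_regular[OF coloured_tree_swap[OF T] N]
      perm_group_id[OF M] by blast
  then show ?thesis using coloured_tree.U_c_swap[OF T] by simp
qed

theorem corollary6p5:
  fixes X Y :: "'a set" and M N :: "('a \<Rightarrow> 'a) set"
    and V VX VY :: "'v set" and adj :: "'v \<Rightarrow> 'v \<Rightarrow> bool" and c :: "'v \<times> 'v \<Rightarrow> 'a"
  assumes "X \<inter> Y = {}" and "countable X" and "countable Y"
    and "\<exists>a\<in>X. \<exists>b\<in>X. a \<noteq> b" and "\<exists>a\<in>Y. \<exists>b\<in>Y. a \<noteq> b"
    and "closed_perm_group M X" and "closed_perm_group N Y"
    and "nontrivial_group M" and "nontrivial_group N"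
    and "legal_coloured_biregular_tree X Y V adj VX VY c"
  shows "(countable (box_product V adj VX VY c M N)
            \<or> box_product V adj VX VY c M N \<approx> (UNIV :: nat set set))
         \<and> (countable (box_product V adj VX VY c M N)
              \<longleftrightarrow> semi_regular M X \<and> semi_regular N Y)"
proof -
  have T: "coloured_tree X Y V VX VY adj c" using assms(1,4,5,10) by unfold_locales
  have M: "perm_group M X" and N: "perm_group N Y"
    using assms(6,7) by (simp_all add: closed_perm_group_def)
  have B_U: "box_product V adj VX VY c M N \<approx> U_c V adj VX VY c M N"
    using coloured_tree.box_product_eqpoll_U_c[OF T] .
  show ?thesis
  proof (cases "semi_regular M X \<and> semi_regular N Y")
    case True
    then have "countable (U_c V adj VX VY c M N)"
      using coloured_tree.countable_U_c[OF T M _ N _ assms(2,3)] by blast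
    then show ?thesis using True countable_eqpoll B_U by blast
  next
    case False
    have "U_c V adj VX VY c M N \<approx> (UNIV :: nat set set)"
      using lepoll_antisym coloured_tree.U_c_lepoll_nat_set[OF T assms(2,3)]
        nat_set_lepoll_U_c[OF T M N False]
      by blast
    then have B: "box_product V adj VX VY c M N \<approx> (UNIV :: nat set set)"
      using B_U eqpoll_trans by blast
    then have "\<not> countable (box_product V adj VX VY c M N)"
      using countable_eqpoll eqpoll_sym uncountable_UNIV_nat_set by blast
    then show ?thesis using B False by blast
  qed
qed

end
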